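(* Let $\mathfrak l$ be a real finite-dimensional nilpotent Lie algebra with $\dim\mathfrak l'=2$ and $\mathfrak l'\subset\mathfrak z(\mathfrak l)$, let $\bar{\mathfrak l}\subset\mathfrak l$ be a 3-dimensional subspace with $[\bar{\mathfrak l},\bar{\mathfrak l}]=\mathfrak l'$, let $\mathfrak a$ be a semisimple orthogonal $\mathfrak l$-module, and let $[\alpha,\gamma]\in\mathcal H^2_Q(\mathfrak l,\mathfrak a)$ be admissible, represented by $(\alpha,\gamma)$ with $\alpha(\mathfrak l,\mathfrak l)\subset\mathfrak a^{\mathfrak l}$. If $K\in\mathfrak l'$ satisfies $\alpha(K,\bar{\mathfrak l})=0$, then $\alpha(K,\mathfrak l)=0$.
   Context: For a Lie algebra $\mathfrak l$: $\mathfrak l^1=\mathfrak l$, $\mathfrak l^{k+1}=[\mathfrak l,\mathfrak l^k]$, $\mathfrak l'=\mathfrak l^2$, $\mathfrak z(\mathfrak l)$ the centre. An orthogonal $\mathfrak l$-module $(\rho,\mathfrak a)$ is a finite-dimensional real vector space with a nondegenerate symmetric bilinear form $\langle\cdot,\cdot\rangle_{\mathfrak a}$ and a representation by skew-adjoint maps; $\mathfrak a^{\mathfrak l}$ denotes invariants. $C^p(\mathfrak l,\mathfrak a)$: alternating $p$-linear maps with Chevalley–Eilenberg differential $d$; $C^p(\mathfrak l)=C^p(\mathfrak l,\mathbb R)$; $\langle\alpha\wedge\beta\rangle$ is the wedge product followed by contraction with $\langle\cdot,\cdot\rangle_{\mathfrak a}$. $\mathcal Z^2_Q(\mathfrak l,\mathfrak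 a)=\{(\alpha,\gamma)\in C^2(\mathfrak l,\mathfrak a)\oplus C^3(\mathfrak l): d\alpha=0,d\gamma=\frac12\langle\alpha\wedge\alpha\rangle\}$; the group $C^1(\mathfrak l,\mathfrak a)\oplus C^2(\mathfrak l)$ with $(\tau_1,\sigma_1)*(\tau_2,\sigma_2)=(\tau_1+\tau_2,\sigma_1+\sigma_2+\frac12\langle\tau_1\wedge\tau_2\rangle)$ acts by $(\alpha,\gamma)(\tau,\sigma)=(\alpha+d\tau,\gamma+d\sigma+\langle(\alpha+\frac12d\tau)\wedge\tau\rangle)$; $\mathcal H^2_Q(\mathfrak l,\mathfrak a)$ is the orbit set. Admissibility: with $\mathfrak l^{m+2}=0$, $\mathfrak l_{(0)}=\mathfrak z(\mathfrak l)\cap\ker\rho$, $\mathfrak l_{(k)}=\mathfrak z(\mathfrak l)\cap\mathfrak l^{k+1}$ ($k\ge1$), and a representative with $\alpha(\mathfrak l,\mathfrak l)\subset\mathfrak a^{\mathfrak l}$, the class is admissible iff for all $0\le k\le m$: $(A_k)$ whenever $L_0\in\mathfrak l_{(k)}$ and there are $A_0\in\mathfrak a$, $Z_0\in(\mathfrak l^{k+1})^*$ with $\alpha(L,L_0)=0$ and $\gamma(L,L_0,\cdot)=-\langle A_0,\alpha(L,\cdot)\rangle_{\mathfrak a}+\langle Z_0,[L,\cdot]\rangle$ on $\mathfrak l^{k+1}$ for all $L$, then $L_0=0$; $(B_k)$ $\alpha$ applied to the kernel of the bracket map $\mathfrak l\otimes\mathfrak l^{k+1}\to\mathfrak l$ yields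 a nondegenerate subspace of $\mathfrak a$. *)

theory Defs
  imports "HOL-Analysis.Analysis"
begin

definition lie_algebra :: "('l::euclidean_space \<Rightarrow> 'l \<Rightarrow> 'l) \<Rightarrow> bool" where
  "lie_algebra br \<longleftrightarrow> bilinear br \<and> (\<forall>x. br x x = 0) \<and>
     (\<forall>x y z. br x (br y z) + br y (br z x) + br z (br x y) = 0)"

text \<open>Lower central series, shifted: lcs br k = l^(k+1). So lcs br 0 = l, lcs br 1 = l'.\<close>
fun lcs :: "('l::euclidean_space \<Rightarrow> 'l \<Rightarrow> 'l) \<Rightarrow> nat \<Rightarrow> 'l set" where
  "lcs br 0 = UNIV"
| "lcs br (Suc k) = span {br x y | x y. y \<in> lcs br k}"

definition nilpotent_lie :: "('l::euclidean_space \<Rightarrow> 'l \<Rightarrow> 'l) \<Rightarrow> bool" where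
  "nilpotent_lie br \<longleftrightarrow> (\<exists>k. lcs br k = {0})"

definition lie_center :: "('l::euclidean_space \<Rightarrow> 'l \<Rightarrow> 'l) \<Rightarrow> 'l set" where
  "lie_center br = {z. \<forall>x. br x z = 0}"

definition bracket_sub :: "('l::euclidean_space \<Rightarrow> 'l \<Rightarrow> 'l) \<Rightarrow> 'l set \<Rightarrow> 'l set \<Rightarrow> 'l set" where
  "bracket_sub br U V = span {br x y | x y. x \<in> U \<and> y \<in> V}"

text \<open>Orthogonal module (rho, a) with nondegenerate symmetric bilinear form B
  (not necessarily definite); a is the whole type 'a.\<close>
definition orthogonal_module ::
  "('l::euclidean_space \<Rightarrow> 'l \<Rightarrow> 'l) \<Rightarrow> ('l \<Rightarrow> 'a::euclidean_space \<Rightarrow> 'a) \<Rightarrow> ('a \<Rightarrow> 'a \<Rightarrow> real) \<Rightarrow> bool" where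
  "orthogonal_module br rho B \<longleftrightarrow>
     bilinear B \<and> (\<forall>u v. B u v = B v u) \<and> (\<forall>u. (\<forall>v. B u v = 0) \<longrightarrow> u = 0) \<and>
     bilinear rho \<and>
     (\<forall>X Y v. rho (br X Y) v = rho X (rho Y v) - rho Y (rho X v)) \<and>
     (\<forall>L u v. B (rho L u) v + B u (rho L v) = 0)"

definition invariant_sub :: "('l \<Rightarrow> 'a::euclidean_space \<Rightarrow> 'a) \<Rightarrow> 'a set \<Rightarrow> bool" where
  "invariant_sub rho U \<longleftrightarrow> (\<forall>L. \<forall>u\<in>U. rho L u \<in> U)"

definition semisimple_module :: "('l \<Rightarrow> 'a::euclidean_space \<Rightarrow> 'a) \<Rightarrow> bool" where
  "semisimple_module rho \<longleftrightarrow>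
     (\<forall>U. subspace U \<and> invariant_sub rho U \<longrightarrow>
        (\<exists>V. subspace V \<and> invariant_sub rho V \<and> U \<inter> V = {0} \<and> U + V = UNIV))"

definition invariants :: "('l \<Rightarrow> 'a::euclidean_space \<Rightarrow> 'a) \<Rightarrow> 'a set" where
  "invariants rho = {v. \<forall>L. rho L v = 0}"

definition rho_kernel :: "('l \<Rightarrow> 'a::euclidean_space \<Rightarrow> 'a) \<Rightarrow> 'l set" where
  "rho_kernel rho = {L. \<forall>v. rho L v = 0}"

definition cochain2 :: "('l::euclidean_space \<Rightarrow> 'l \<Rightarrow> 'a::euclidean_space) \<Rightarrow> bool" where
  "cochain2 \<alpha> \<longleftrightarrow> bilinear \<alpha> \<and> (\<forall>x. \<alpha> x x = 0)"

definition cochain3 :: "('l::euclidean_space \<Rightarrow> 'l \<Rightarrow> 'l \<Rightarrow> real) \<Rightarrow> bool" where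
  "cochain3 \<gamma> \<longleftrightarrow> (\<forall>y z. linear (\<lambda>x. \<gamma> x y z)) \<and> (\<forall>x z. linear (\<lambda>y. \<gamma> x y z)) \<and>
     (\<forall>x y. linear (\<lambda>z. \<gamma> x y z)) \<and> (\<forall>x z. \<gamma> x x z = 0) \<and> (\<forall>x y. \<gamma> x y y = 0)"

definition d2 :: "('l \<Rightarrow> 'l \<Rightarrow> 'l) \<Rightarrow> ('l \<Rightarrow> 'a \<Rightarrow> 'a) \<Rightarrow> ('l \<Rightarrow> 'l \<Rightarrow> 'a::real_vector)
     \<Rightarrow> 'l \<Rightarrow> 'l \<Rightarrow> 'l \<Rightarrow> 'a" where
  "d2 br rho \<alpha> X Y Z =
     rho X (\<alpha> Y Z) - rho Y (\<alpha> X Z) + rho Z (\<alpha> X Y)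
     - \<alpha> (br X Y) Z + \<alpha> (br X Z) Y - \<alpha> (br Y Z) X"

definition d3 :: "('l \<Rightarrow> 'l \<Rightarrow> 'l) \<Rightarrow> ('l \<Rightarrow> 'l \<Rightarrow> 'l \<Rightarrow> real) \<Rightarrow> 'l \<Rightarrow> 'l \<Rightarrow> 'l \<Rightarrow> 'l \<Rightarrow> real" where
  "d3 br \<gamma> X1 X2 X3 X4 =
     - \<gamma> (br X1 X2) X3 X4 + \<gamma> (br X1 X3) X2 X4 - \<gamma> (br X1 X4) X2 X3
     - \<gamma> (br X2 X3) X1 X4 + \<gamma> (br X2 X4) X1 X3 - \<gamma> (br X3 X4) X1 X2"

text \<open>The 4-form <alpha wedge alpha> (wedge product summed over (2,2)-shuffles, then
  contraction with B).\<close>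
definition wedge_contr :: "('a \<Rightarrow> 'a \<Rightarrow> real) \<Rightarrow> ('l \<Rightarrow> 'l \<Rightarrow> 'a) \<Rightarrow> 'l \<Rightarrow> 'l \<Rightarrow> 'l \<Rightarrow> 'l \<Rightarrow> real" where
  "wedge_contr B \<alpha> X1 X2 X3 X4 =
       B (\<alpha> X1 X2) (\<alpha> X3 X4) - B (\<alpha> X1 X3) (\<alpha> X2 X4) + B (\<alpha> X1 X4) (\<alpha> X2 X3)
     + B (\<alpha> X2 X3) (\<alpha> X1 X4) - B (\<alpha> X2 X4) (\<alpha> X1 X3) + B (\<alpha> X3 X4) (\<alpha> X1 X2)"

definition Z2Q :: "('l::euclidean_space \<Rightarrow> 'l \<Rightarrow> 'l) \<Rightarrow> ('l \<Rightarrow> 'a::euclidean_space \<Rightarrow> 'a) \<Rightarrow> ('a \<Rightarrow> 'a \<Rightarrow> real)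
     \<Rightarrow> ('l \<Rightarrow> 'l \<Rightarrow> 'a) \<Rightarrow> ('l \<Rightarrow> 'l \<Rightarrow> 'l \<Rightarrow> real) \<Rightarrow> bool" where
  "Z2Q br rho B \<alpha> \<gamma> \<longleftrightarrow> cochain2 \<alpha> \<and> cochain3 \<gamma> \<and>
     (\<forall>X Y Z. d2 br rho \<alpha> X Y Z = 0) \<and>
     (\<forall>X1 X2 X3 X4. d3 br \<gamma> X1 X2 X3 X4 = (1/2) * wedge_contr B \<alpha> X1 X2 X3 X4)"

definition lsub :: "('l::euclidean_space \<Rightarrow> 'l \<Rightarrow> 'l) \<Rightarrow> ('l \<Rightarrow> 'a::euclidean_space \<Rightarrow> 'a) \<Rightarrow> nat \<Rightarrow> 'l set" where
  "lsub br rho k = (if k = 0 then lie_center br \<inter> rho_kernel rho else lie_center br \<inter> lcs br k)"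

text \<open>Condition (A_k). Z0 in (l^(k+1))^* is represented by a linear functional on l
  (every functional on the subspace extends); only its values on l^(k+1) matter.\<close>
definition cond_A :: "('l::euclidean_space \<Rightarrow> 'l \<Rightarrow> 'l) \<Rightarrow> ('l \<Rightarrow> 'a::euclidean_space \<Rightarrow> 'a) \<Rightarrow> ('a \<Rightarrow> 'a \<Rightarrow> real)
     \<Rightarrow> ('l \<Rightarrow> 'l \<Rightarrow> 'a) \<Rightarrow> ('l \<Rightarrow> 'l \<Rightarrow> 'l \<Rightarrow> real) \<Rightarrow> nat \<Rightarrow> bool" where
  "cond_A br rho B \<alpha> \<gamma> k \<longleftrightarrow>
     (\<forall>L0 \<in> lsub br rho k.
        (\<exists>(A0::'a) (Z0::'l \<Rightarrow> real). linear Z0 \<and>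
           (\<forall>L. \<alpha> L L0 = 0 \<and>
                (\<forall>X \<in> lcs br k. \<gamma> L L0 X = - B A0 (\<alpha> L X) + Z0 (br L X))))
        \<longrightarrow> L0 = 0)"

text \<open>alpha applied to the kernel of the bracket map l \<otimes> l^(k+1) \<rightarrow> l. Elements of the tensor
  product are represented as finite sums of elementary tensors (lists of pairs).\<close>
definition alpha_ker :: "('l::euclidean_space \<Rightarrow> 'l \<Rightarrow> 'l) \<Rightarrow> ('l \<Rightarrow> 'l \<Rightarrow> 'a::euclidean_space) \<Rightarrow> nat \<Rightarrow> 'a set" where
  "alpha_ker br \<alpha> k =
     {sum_list (map (\<lambda>(X,Y). \<alpha> X Y) ps) | ps.
        (\<forall>(X,Y) \<in> set ps. Y \<in> lcs br k) \<and> sum_list (map (\<lambda>(X,Y). br X Y) ps) = 0}"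

definition nondegenerate_sub :: "('a::real_vector \<Rightarrow> 'a \<Rightarrow> real) \<Rightarrow> 'a set \<Rightarrow> bool" where
  "nondegenerate_sub B W \<longleftrightarrow> (\<forall>w\<in>W. (\<forall>w'\<in>W. B w w' = 0) \<longrightarrow> w = 0)"

definition cond_B :: "('l::euclidean_space \<Rightarrow> 'l \<Rightarrow> 'l) \<Rightarrow> ('a::euclidean_space \<Rightarrow> 'a \<Rightarrow> real)
     \<Rightarrow> ('l \<Rightarrow> 'l \<Rightarrow> 'a) \<Rightarrow> nat \<Rightarrow> bool" where
  "cond_B br B \<alpha> k \<longleftrightarrow> nondegenerate_sub B (alpha_ker br \<alpha> k)"

text \<open>Admissibility of the class [alpha,gamma], tested on a representative with
  alpha(l,l) \<subseteq> a^l; k ranges over 0..m where l^(m+2)=0.\<close>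
definition admissible :: "('l::euclidean_space \<Rightarrow> 'l \<Rightarrow> 'l) \<Rightarrow> ('l \<Rightarrow> 'a::euclidean_space \<Rightarrow> 'a) \<Rightarrow> ('a \<Rightarrow> 'a \<Rightarrow> real)
     \<Rightarrow> ('l \<Rightarrow> 'l \<Rightarrow> 'a) \<Rightarrow> ('l \<Rightarrow> 'l \<Rightarrow> 'l \<Rightarrow> real) \<Rightarrow> bool" where
  "admissible br rho B \<alpha> \<gamma> \<longleftrightarrow>
     (\<forall>m. lcs br (m + 1) = {0} \<longrightarrow>
        (\<forall>k \<le> m. cond_A br rho B \<alpha> \<gamma> k \<and> cond_B br B \<alpha> k))"

end

theory Submission
  imports Defs
begin

text \<open>Because \<open>\<alpha>\<close> takes invariant values, the cocycle condition reads
  \<open>\<alpha>([X,Y],Z) = \<alpha>([X,Z],Y) - \<alpha>([Y,Z],X)\<close>; as l' is central this gives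
  \<open>\<alpha>(l',l') = 0\<close>. Since \<open>dim l' = 2\<close>, the alternating form \<open>\<gamma>\<close> vanishes on l',
  and evaluating \<open>d\<gamma> = 1/2 <\<alpha> \<and> \<alpha>>\<close> at \<open>(K,K',W,X)\<close> with \<open>K' \<in> l'\<close>,
  \<open>X \<in> Lbar\<close> leaves only \<open>B(\<alpha>(K,W),\<alpha>(K',X)) = 0\<close>. As \<open>l' = [Lbar,Lbar]\<close>, the
  cocycle identity propagates this to \<open>\<alpha>(K,W) \<bottom> \<alpha>(l',l)\<close>. Finally the bracket map
  \<open>l \<otimes> l' \<rightarrow> l\<close> is zero, so by condition \<open>(B\<^sub>1)\<close> the span of \<open>\<alpha>(l,l')\<close> is
  nondegenerate; it contains \<open>\<alpha>(K,W)\<close>, hence \<open>\<alpha>(K,W) = 0\<close>.\<close>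

lemma bilinear_alternating_swap:
  assumes "bilinear f" and "\<And>x. f x x = 0"
  shows "f x y = - f y x"
proof -
  have "0 = f (x + y) (x + y)" using assms(2) by simp
  also have "\<dots> = f x x + f x y + f y x + f y y"
    using bilinear_ladd[OF assms(1)] bilinear_radd[OF assms(1)] by simp
  finally show ?thesis using assms(2) by (simp add: eq_neg_iff_add_eq_0)
qed

lemma cochain3_bilinear_12:
  assumes "cochain3 \<gamma>"
  shows "bilinear (\<lambda>x y. \<gamma> x y z)"
  using assms unfolding cochain3_def bilinear_def by blast

lemma cochain3_eq_0_13:
  assumes "cochain3 \<gamma>"
  shows "\<gamma> x y x = 0"
  using bilinear_alternating_swap[OF cochain3_bilinear_12[OF assms, of x], of x y] assms
  unfolding cochain3_def by simp

lemma cochain3_eq_0_if_dim_le_2: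
  assumes \<gamma>: "cochain3 \<gamma>" and "dim S \<le> 2" and "u \<in> S" "v \<in> S" "w \<in> S"
  shows "\<gamma> u v w = 0"
proof -
  have "linear (\<lambda>y. \<gamma> u y w)" "linear (\<gamma> u v)" "linear (\<lambda>x. \<gamma> x v w)"
    using \<gamma> unfolding cochain3_def by blast+
  note linear = this
  consider "v = 0" | "w \<in> span {v}" | "v \<noteq> w" "independent {w, v}"
    using span_base[of v "{v}"] by (auto simp: independent_insert)
  then show ?thesis
  proof cases
    case 1
    then show ?thesis using linear_0[OF linear(1)] by simp
  next
    case 2
    then obtain c where "w = c *\<^sub>R v" by (auto simp: span_singleton)
    then show ?thesis
      using linear_cmul[OF linear(2)] \<gamma> unfolding cochain3_def by simp
  next
    case 3
    with assms have "S \<subseteq> span {w, v}"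
      by (intro card_ge_dim_independent) auto
    moreover have "\<gamma> x v w = 0" if "x \<in> {w, v}" for x
      using that cochain3_eq_0_13[OF \<gamma>] \<gamma> unfolding cochain3_def by auto
    ultimately show ?thesis
      using linear_eq_0_on_span[OF linear(3)] \<open>u \<in> S\<close> by blast
  qed
qed

lemma lcs_1_eq: "lcs br 1 = span {br x y | x y. True}"
  using lcs.simps(2)[of br 0] by (simp add: One_nat_def)

lemma bracket_in_lcs_1: "br x y \<in> lcs br 1"
  unfolding lcs_1_eq by (rule span_base) blast

lemma lcs_2_eq_0_if_lcs_1_central:
  assumes "lcs br 1 \<subseteq> lie_center br"
  shows "lcs br 2 = {0}"
proof -
  have "{br x y | x y. y \<in> lcs br 1} \<subseteq> {0}"
    using assms unfolding lie_center_def by blast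
  then have "span {br x y | x y. y \<in> lcs br 1} \<subseteq> {0}"
    using span_mono[of _ "{0}"] by (simp add: span_insert_0)
  then show ?thesis
    using lcs.simps(2)[of br 1, unfolded Suc_1] span_zero by blast
qed

lemma admissible_cond_B:
  assumes "admissible br rho B \<alpha> \<gamma>" and "lcs br (m + 1) = {0}" and "k \<le> m"
  shows "cond_B br B \<alpha> k"
  using assms unfolding admissible_def by simp

lemma alpha_center_in_alpha_ker:
  assumes "K \<in> lcs br k" and "K \<in> lie_center br"
  shows "\<alpha> X K \<in> alpha_ker br \<alpha> k"
proof -
  have "br X K = 0" using assms(2) unfolding lie_center_def by blast
  then show ?thesis
    using assms(1) unfolding alpha_ker_def
    by (intro CollectI exI[of _ "[(X, K)]"]) simp
qed

lemma alpha_ker_subset_span: "alpha_ker br \<alpha> k \<subseteq> span {\<alpha> X Y | X Y. Y \<in> lcs br k}"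
proof
  fix w assume "w \<in> alpha_ker br \<alpha> k"
  then obtain ps where w: "w = sum_list (map (\<lambda>(X, Y). \<alpha> X Y) ps)"
    and ps: "\<forall>(X, Y) \<in> set ps. Y \<in> lcs br k"
    unfolding alpha_ker_def by blast
  from ps have "sum_list (map (\<lambda>(X, Y). \<alpha> X Y) ps) \<in> span {\<alpha> X Y | X Y. Y \<in> lcs br k}"
    by (induction ps) (auto intro: span_add span_base span_zero)
  then show "w \<in> span {\<alpha> X Y | X Y. Y \<in> lcs br k}" using w by simp
qed

lemma cond_B_eq_0:
  assumes "cond_B br B \<alpha> k" and "bilinear B" and "a \<in> alpha_ker br \<alpha> k"
    and "\<And>X Y. Y \<in> lcs br k \<Longrightarrow> B a (\<alpha> X Y) = 0"
  shows "a = 0"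
proof -
  have "linear (B a)" using assms(2) unfolding bilinear_def by blast
  moreover have "B a s = 0" if "s \<in> {\<alpha> X Y | X Y. Y \<in> lcs br k}" for s
    using assms(4) that by blast
  ultimately have "B a w = 0" if "w \<in> alpha_ker br \<alpha> k" for w
    using linear_eq_0_on_span[of "B a"] alpha_ker_subset_span[of br \<alpha> k] that by blast
  then show ?thesis
    using assms(1,3) unfolding cond_B_def nondegenerate_sub_def by blast
qed

locale invariant_quadratic_cocycle =
  fixes br :: "'l::euclidean_space \<Rightarrow> 'l \<Rightarrow> 'l"
    and rho :: "'l \<Rightarrow> 'a::euclidean_space \<Rightarrow> 'a"
    and B :: "'a \<Rightarrow> 'a \<Rightarrow> real"
    and \<alpha> :: "'l \<Rightarrow> 'l \<Rightarrow> 'a"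
    and \<gamma> :: "'l \<Rightarrow> 'l \<Rightarrow> 'l \<Rightarrow> real"
  assumes lie_algebra: "lie_algebra br"
    and orthogonal_module: "orthogonal_module br rho B"
    and Z2Q: "Z2Q br rho B \<alpha> \<gamma>"
    and alpha_invariant: "\<And>X Y. \<alpha> X Y \<in> invariants rho"
begin

lemma bilinear_br: "bilinear br"
  using lie_algebra unfolding lie_algebra_def by blast

lemma br_swap: "br x y = - br y x"
  by (rule bilinear_alternating_swap[OF bilinear_br])
    (use lie_algebra in \<open>simp add: lie_algebra_def\<close>)

lemma br_center_left: "z \<in> lie_center br \<Longrightarrow> br z x = 0"
  using br_swap[of z x] unfolding lie_center_def by simp

lemma bilinear_alpha: "bilinear \<alpha>"
  using Z2Q unfolding Z2Q_def cochain2_def by blast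

lemma alpha_swap: "\<alpha> x y = - \<alpha> y x"
  by (rule bilinear_alternating_swap[OF bilinear_alpha])
    (use Z2Q in \<open>simp add: Z2Q_def cochain2_def\<close>)

lemma bilinear_B: "bilinear B"
  using orthogonal_module unfolding orthogonal_module_def by blast

lemma cochain3_gamma: "cochain3 \<gamma>"
  using Z2Q unfolding Z2Q_def by blast

lemma alpha_bracket: "\<alpha> (br X Y) Z = \<alpha> (br X Z) Y - \<alpha> (br Y Z) X"
proof -
  have "d2 br rho \<alpha> X Y Z = 0" using Z2Q unfolding Z2Q_def by blast
  moreover have "rho L (\<alpha> U V) = 0" for L U V
    using alpha_invariant unfolding invariants_def by blast
  ultimately show ?thesis unfolding d2_def by (simp add: algebra_simps)
qed

lemma alpha_lcs_1_center:
  assumes "v \<in> lcs br 1" and "z \<in> lie_center br"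
  shows "\<alpha> v z = 0"
proof -
  have "linear (\<lambda>v. \<alpha> v z)" using bilinear_alpha unfolding bilinear_def by blast
  moreover have "\<alpha> w z = 0" if w: "w \<in> {br x y | x y. True}" for w
  proof -
    obtain x y where "w = br x y" using w by blast
    moreover have "br x z = 0" "br y z = 0" using assms(2) unfolding lie_center_def by blast+
    ultimately show ?thesis
      using alpha_bracket[of x y z] bilinear_lzero[OF bilinear_alpha] by simp
  qed
  ultimately show ?thesis
    using linear_eq_0_on_span[of "\<lambda>v. \<alpha> v z"] assms(1) unfolding lcs_1_eq by blast
qed

text \<open>At \<open>(K,K',W,X)\<close> all brackets with the central \<open>K, K'\<close> vanish, and the two
  surviving pairings of \<open><\<alpha> \<and> \<alpha>>\<close> coincide by symmetry of \<open>B\<close>.\<close>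
lemma quadratic_relation_orthogonal:
  assumes "K \<in> lie_center br" "K' \<in> lie_center br"
    and "\<alpha> K K' = 0" "\<alpha> K X = 0" "\<gamma> (br W X) K K' = 0"
  shows "B (\<alpha> K W) (\<alpha> K' X) = 0"
proof -
  have "d3 br \<gamma> K K' W X = (1/2) * wedge_contr B \<alpha> K K' W X"
    using Z2Q unfolding Z2Q_def by blast
  moreover have "d3 br \<gamma> K K' W X = - \<gamma> (br W X) K K'"
  proof -
    have "br x K = 0" "br x K' = 0" "br K x = 0" "br K' x = 0" for x
      using assms(1,2) br_center_left unfolding lie_center_def by blast+
    moreover have "\<gamma> 0 y z = 0" for y z
      using bilinear_lzero[OF cochain3_bilinear_12[OF cochain3_gamma]] .
    ultimately show ?thesis unfolding d3_def by simp
  qed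
  moreover have "wedge_contr B \<alpha> K K' W X = - 2 * B (\<alpha> K W) (\<alpha> K' X)"
    using assms(3,4) orthogonal_module
    unfolding wedge_contr_def orthogonal_module_def
    by (simp add: bilinear_lzero bilinear_rzero)
  ultimately show ?thesis using assms(5) by simp
qed

lemma alpha_bracket_sub_orthogonal:
  assumes "\<And>K' X. K' \<in> lcs br 1 \<Longrightarrow> X \<in> U \<Longrightarrow> B a (\<alpha> K' X) = 0"
    and "K \<in> bracket_sub br U U"
  shows "B a (\<alpha> K Z) = 0"
proof -
  have "linear (\<lambda>K. B a (\<alpha> K Z))"
    using linear_compose[of "\<lambda>K. \<alpha> K Z" "B a"] bilinear_alpha bilinear_B
    unfolding bilinear_def o_def by blast
  moreover have "B a (\<alpha> w Z) = 0" if w: "w \<in> {br x y | x y. x \<in> U \<and> y \<in> U}" for w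
  proof -
    obtain x y where "w = br x y" "x \<in> U" "y \<in> U" using w by blast
    then show ?thesis
      using alpha_bracket[of x y Z] assms(1)[OF bracket_in_lcs_1]
      by (simp add: bilinear_rsub[OF bilinear_B])
  qed
  ultimately show ?thesis
    using linear_eq_0_on_span[of "\<lambda>K. B a (\<alpha> K Z)"] assms(2)
    unfolding bracket_sub_def by blast
qed

end

theorem lemma3:
  fixes br :: "'l::euclidean_space \<Rightarrow> 'l \<Rightarrow> 'l"
    and rho :: "'l \<Rightarrow> 'a::euclidean_space \<Rightarrow> 'a"
    and B :: "'a \<Rightarrow> 'a \<Rightarrow> real"
    and \<alpha> :: "'l \<Rightarrow> 'l \<Rightarrow> 'a"
    and \<gamma> :: "'l \<Rightarrow> 'l \<Rightarrow> 'l \<Rightarrow> real"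
    and Lbar :: "'l set"
    and K :: 'l
  assumes "lie_algebra br"
    and "nilpotent_lie br"
    and "dim (lcs br 1) = 2"
    and "lcs br 1 \<subseteq> lie_center br"
    and "subspace Lbar" and "dim Lbar = 3"
    and "bracket_sub br Lbar Lbar = lcs br 1"
    and "orthogonal_module br rho B"
    and "semisimple_module rho"
    and "Z2Q br rho B \<alpha> \<gamma>"
    and "\<forall>X Y. \<alpha> X Y \<in> invariants rho"
    and "admissible br rho B \<alpha> \<gamma>"
    and "K \<in> lcs br 1"
    and "\<forall>X \<in> Lbar. \<alpha> K X = 0"
  shows "\<forall>X. \<alpha> K X = 0"
proof
  interpret invariant_quadratic_cocycle br rho B \<alpha> \<gamma>
    by unfold_locales (use assms(1,8,10,11) in auto)
  fix W
  have central: "K' \<in> lie_center br" if "K' \<in> lcs br 1" for K'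
    using assms(4) that by blast
  have "B (\<alpha> K W) (\<alpha> K' X) = 0" if K': "K' \<in> lcs br 1" and X: "X \<in> Lbar" for K' X
  proof (rule quadratic_relation_orthogonal[OF central[OF assms(13)] central[OF K']])
    show "\<alpha> K K' = 0" using alpha_lcs_1_center[OF assms(13) central[OF K']] .
    show "\<alpha> K X = 0" using assms(14) X by blast
    show "\<gamma> (br W X) K K' = 0"
      using cochain3_eq_0_if_dim_le_2[OF cochain3_gamma _ bracket_in_lcs_1 assms(13) K'] assms(3)
      by simp
  qed
  then have orthogonal: "B (\<alpha> K W) (\<alpha> K' Z) = 0" if "K' \<in> lcs br 1" for K' Z
    using alpha_bracket_sub_orthogonal[where U = Lbar] assms(7) that by blast
  have "lcs br (1 + 1) = {0}"
    using lcs_2_eq_0_if_lcs_1_central[OF assms(4)] by (simp only: one_add_one)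
  then have "cond_B br B \<alpha> 1"
    using admissible_cond_B[OF assms(12)] by blast
  then have "\<alpha> W K = 0"
  proof (rule cond_B_eq_0[OF _ bilinear_B alpha_center_in_alpha_ker[OF assms(13) central[OF assms(13)]]])
    show "B (\<alpha> W K) (\<alpha> X Y) = 0" if "Y \<in> lcs br 1" for X Y
      using orthogonal[OF that, of X] alpha_swap[of W K] alpha_swap[of X Y]
      by (simp add: bilinear_lneg[OF bilinear_B] bilinear_rneg[OF bilinear_B])
  qed
  then show "\<alpha> K W = 0" using alpha_swap[of K W] by simp
qed

end
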